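(* For every $n\ge1$ there are bijections $\varphi:\mathfrak{S}_n(213)\to\mathfrak{S}_n(312)$ and $\eta:\mathfrak{S}_n(132)\to\mathfrak{S}_n(231)$ preserving the descent set $\{i\in[n-1]:\pi_i>\pi_{i+1}\}$. Consequently $|\mathcal{B}_n(213)|=|\mathcal{B}_n(312)|$ and $|\mathcal{B}_n(132)|=|\mathcal{B}_n(231)|$ for all $n\ge1$.
   Context: $\mathfrak{S}_n(\sigma)$ is the set of permutations in $\mathfrak{S}_n$ with no subsequence order-isomorphic to the pattern $\sigma$. A ballot permutation is a $\pi\in\mathfrak{S}_n$ such that every prefix $\pi_1\cdots\pi_i$ has at most as many descents ($\pi_j>\pi_{j+1}$) as ascents ($\pi_j<\pi_{j+1}$); $\mathcal{B}_n(\sigma)$ is the set of $\sigma$-avoiding ballot permutations in $\mathfrak{S}_n$. *)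

theory Defs
  imports Main
begin

definition perms :: "nat \<Rightarrow> nat list set" where
  "perms n = {xs. length xs = n \<and> distinct xs \<and> set xs = {1..n}}"

definition contains_pattern :: "nat list \<Rightarrow> nat list \<Rightarrow> bool" where
  "contains_pattern p \<sigma> \<longleftrightarrow>
     (\<exists>idx :: nat \<Rightarrow> nat.
        (\<forall>i j. i < j \<and> j < length \<sigma> \<longrightarrow> idx i < idx j) \<and>
        (\<forall>i < length \<sigma>. idx i < length p) \<and>
        (\<forall>i < length \<sigma>. \<forall>j < length \<sigma>. (p ! idx i < p ! idx j) \<longleftrightarrow> (\<sigma> ! i < \<sigma> ! j)))"

definition avoiders :: "nat \<Rightarrow> nat list \<Rightarrow> nat list set" where
  "avoiders n \<sigma> = {p \<in> perms n. \<not> contains_pattern p \<sigma>}"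

text \<open>Descent set {i in [n-1] : pi_i > pi_(i+1)}, positions 1-based.\<close>
definition descent_set :: "nat list \<Rightarrow> nat set" where
  "descent_set p = {i. 1 \<le> i \<and> i < length p \<and> p ! (i - 1) > p ! i}"

definition ballot :: "nat list \<Rightarrow> bool" where
  "ballot p \<longleftrightarrow> (\<forall>k \<le> length p.
     card {j. 1 \<le> j \<and> j < k \<and> p ! (j - 1) > p ! j}
       \<le> card {j. 1 \<le> j \<and> j < k \<and> p ! (j - 1) < p ! j})"

definition ballot_avoiders :: "nat \<Rightarrow> nat list \<Rightarrow> nat list set" where
  "ballot_avoiders n \<sigma> = {p \<in> avoiders n \<sigma>. ballot p}"

end

theory Submission
  imports Defs
begin

text \<open>Cutting a 213- or 312-avoiding permutation at its minimum leaves two blocks of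
consecutive values that again avoid the pattern; for 213 the left block lies above the right
one, for 312 below it. Recursing on both blocks encodes either class by the same binary trees,
and the descent set is determined by the tree alone (there is a descent just before the minimum
iff the left block is nonempty). Composing one encoding with the inverse of the other therefore
preserves descents. Complementing the values maps 213 and 312 to 231 and 132 and replaces the
descent set by its complement in [n-1], which gives the second bijection. Whether a permutation
is ballot depends only on its descent set, so both bijections restrict to the ballot ones.\<close>

definition has_triple :: "(nat \<Rightarrow> nat \<Rightarrow> nat \<Rightarrow> bool) \<Rightarrow> nat list \<Rightarrow> bool" where
  "has_triple P xs \<longleftrightarrow> (\<exists>i j k. i < j \<and> j < k \<and> k < length xs \<and> P (xs!i) (xs!j) (xs!k))"

lemma contains_pattern_length3:
  "contains_pattern p [a,b,c] \<longleftrightarrow> has_triple (\<lambda>x y z. (x<y \<longleftrightarrow> a<b) \<and> (y<x \<longleftrightarrow> b<a) \<and> (x<z \<longleftrightarrow> a<c)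
      \<and> (z<x \<longleftrightarrow> c<a) \<and> (y<z \<longleftrightarrow> b<c) \<and> (z<y \<longleftrightarrow> c<b)) p" (is "_ \<longleftrightarrow> has_triple ?Q p")
proof
  have less3: "(\<forall>i<(3::nat). R i) \<longleftrightarrow> R 0 \<and> R 1 \<and> R 2" for R
    by (auto simp: less_Suc_eq numeral_3_eq_3 numeral_2_eq_2)
  have len: "length [a,b,c] = 3" by simp
  assume "contains_pattern p [a,b,c]"
  then obtain idx where "\<forall>i j. i < j \<and> j < 3 \<longrightarrow> idx i < idx j" "\<forall>i < 3. idx i < length p"
    and "\<forall>i < 3. \<forall>j < 3. (p ! idx i < p ! idx j) \<longleftrightarrow> ([a,b,c] ! i < [a,b,c] ! j)"
    unfolding contains_pattern_def len by blast
  then show "has_triple ?Q p"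
    unfolding has_triple_def less3
    by (intro exI[of _ "idx 0"] exI[of _ "idx 1"] exI[of _ "idx 2"]) simp
next
  assume "has_triple ?Q p"
  then obtain i j k where "i < j" "j < k" "k < length p" "?Q (p!i) (p!j) (p!k)"
    unfolding has_triple_def by blast
  then show "contains_pattern p [a,b,c]"
    unfolding contains_pattern_def
    by (intro exI[of _ "\<lambda>t. if t = 0 then i else if t = 1 then j else k"])
       (auto simp: less_Suc_eq nth_Cons')
qed

text \<open>213 and 312 are the patterns whose middle entry is the smallest; they differ only in the
relation Q between the two outer entries.\<close>

definition valley :: "(nat \<Rightarrow> nat \<Rightarrow> bool) \<Rightarrow> nat \<Rightarrow> nat \<Rightarrow> nat \<Rightarrow> bool" where
  "valley Q x y z \<longleftrightarrow> y < x \<and> y < z \<and> Q x z"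

lemma contains_213_iff: "contains_pattern p [2,1,3] \<longleftrightarrow> has_triple (valley (<)) p"
proof -
  have "(\<lambda>x y z. (x<y \<longleftrightarrow> (2::nat)<1) \<and> (y<x \<longleftrightarrow> (1::nat)<2) \<and> (x<z \<longleftrightarrow> (2::nat)<3)
      \<and> (z<x \<longleftrightarrow> (3::nat)<2) \<and> (y<z \<longleftrightarrow> (1::nat)<3) \<and> (z<y \<longleftrightarrow> (3::nat)<1)) = valley (<)"
    by (auto simp: fun_eq_iff valley_def)
  then show ?thesis by (simp only: contains_pattern_length3)
qed

lemma contains_312_iff: "contains_pattern p [3,1,2] \<longleftrightarrow> has_triple (valley (>)) p"
proof -
  have "(\<lambda>x y z. (x<y \<longleftrightarrow> (3::nat)<1) \<and> (y<x \<longleftrightarrow> (1::nat)<3) \<and> (x<z \<longleftrightarrow> (3::nat)<2)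
      \<and> (z<x \<longleftrightarrow> (2::nat)<3) \<and> (y<z \<longleftrightarrow> (1::nat)<2) \<and> (z<y \<longleftrightarrow> (2::nat)<1)) = valley (>)"
    by (auto simp: fun_eq_iff valley_def)
  then show ?thesis by (simp only: contains_pattern_length3)
qed

lemma has_triple_append_left: "has_triple P L \<Longrightarrow> has_triple P (L @ R)"
  unfolding has_triple_def
proof (elim exE conjE)
  fix i j k assume "i < j" "j < k" "k < length L" "P (L!i) (L!j) (L!k)"
  then show "\<exists>i j k. i < j \<and> j < k \<and> k < length (L @ R) \<and> P ((L @ R)!i) ((L @ R)!j) ((L @ R)!k)"
    by (intro exI[of _ i] exI[of _ j] exI[of _ k]) (simp add: nth_append)
qed

lemma has_triple_append_right: "has_triple P R \<Longrightarrow> has_triple P (L @ R)"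
  unfolding has_triple_def
proof (elim exE conjE)
  fix i j k assume "i < j" "j < k" "k < length R" "P (R!i) (R!j) (R!k)"
  then show "\<exists>i j k. i < j \<and> j < k \<and> k < length (L @ R) \<and> P ((L @ R)!i) ((L @ R)!j) ((L @ R)!k)"
    by (intro exI[of _ "length L + i"] exI[of _ "length L + j"] exI[of _ "length L + k"])
      (simp add: nth_append)
qed

lemma has_triple_across:
  assumes "x \<in> set L" "z \<in> set R" "P x m z" shows "has_triple P (L @ m # R)"
proof -
  obtain i where "i < length L" "L!i = x" using assms(1) by (auto simp: in_set_conv_nth)
  moreover obtain k where "k < length R" "R!k = z" using assms(2) by (auto simp: in_set_conv_nth)
  ultimately show ?thesis
    unfolding has_triple_def using assms(3)
    by (intro exI[of _ i] exI[of _ "length L"] exI[of _ "length L + Suc k"]) (auto simp: nth_append)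
qed

lemma has_triple_valley_splitD:
  assumes "has_triple (valley Q) (L @ m # R)" and "\<forall>x \<in> set L \<union> set R. m < x"
  shows "has_triple (valley Q) L \<or> has_triple (valley Q) R \<or> (\<exists>x\<in>set L. \<exists>z\<in>set R. Q x z)"
proof -
  obtain i j k where ijk: "i < j" "j < k" "k < length (L @ m # R)"
    and v: "valley Q ((L @ m # R)!i) ((L @ m # R)!j) ((L @ m # R)!k)"
    using assms(1) unfolding has_triple_def by blast
  let ?p = "length L"
  have at_L: "t < ?p \<Longrightarrow> (L @ m # R)!t = L!t \<and> L!t \<in> set L" for t
    by (simp add: nth_append)
  have at_R: "?p < t \<Longrightarrow> t < length (L @ m # R) \<Longrightarrow>
      (L @ m # R)!t = R!(t - Suc ?p) \<and> R!(t - Suc ?p) \<in> set R" for t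
    by (simp add: nth_append)
  consider "k < ?p" | "?p < i" | "i = ?p" | "i < ?p" "k = ?p" | "i < ?p" "?p < k"
    by linarith
  then show ?thesis
  proof cases
    case 1
    then have "has_triple (valley Q) L"
      unfolding has_triple_def using ijk v at_L[of i] at_L[of j] at_L[of k]
      by (intro exI[of _ i] exI[of _ j] exI[of _ k]) simp
    then show ?thesis by blast
  next
    case 2
    then have "has_triple (valley Q) R"
      unfolding has_triple_def using ijk v at_R[of i] at_R[of j] at_R[of k]
      by (intro exI[of _ "i - Suc ?p"] exI[of _ "j - Suc ?p"] exI[of _ "k - Suc ?p"]) auto
    then show ?thesis by blast
  next
    case 3
    then have "(L @ m # R)!j \<in> set R" "(L @ m # R)!i = m"
      using ijk at_R[of j] by auto
    with v assms(2) have False unfolding valley_def by (metis UnI2 not_less_iff_gr_or_eq)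
    then show ?thesis ..
  next
    case 4
    then have "(L @ m # R)!j \<in> set L" "(L @ m # R)!k = m"
      using ijk at_L[of j] by auto
    with v assms(2) have False unfolding valley_def by (metis UnI1 not_less_iff_gr_or_eq)
    then show ?thesis ..
  next
    case 5
    then have "(L @ m # R)!i \<in> set L" "(L @ m # R)!k \<in> set R"
      using ijk at_L[of i] at_R[of k] by auto
    with v show ?thesis unfolding valley_def by blast
  qed
qed

lemma has_triple_valley_split:
  assumes "\<forall>x \<in> set L \<union> set R. m < x"
  shows "has_triple (valley Q) (L @ m # R) \<longleftrightarrow>
    has_triple (valley Q) L \<or> has_triple (valley Q) R \<or> (\<exists>x\<in>set L. \<exists>z\<in>set R. Q x z)"
  using has_triple_valley_splitD[OF _ assms] has_triple_append_left[of _ L "m # R"]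
    has_triple_append_right[of _ R "L @ [m]"] has_triple_across[of _ L _ R "valley Q" m] assms
  by (auto simp: valley_def)

datatype btree = Leaf | Node btree btree

fun tree_perm :: "bool \<Rightarrow> btree \<Rightarrow> nat \<Rightarrow> nat list" where
  "tree_perm left_high Leaf b = []"
| "tree_perm left_high (Node l r) b =
     tree_perm left_high l (if left_high then Suc b + size r else Suc b) @ Suc b #
     tree_perm left_high r (if left_high then Suc b else Suc b + size l)"

lemma length_tree_perm [simp]: "length (tree_perm h t b) = size t"
  by (induction t arbitrary: b) auto

lemma set_tree_perm: "set (tree_perm h t b) = {Suc b..b + size t}"
  by (induction t arbitrary: b) auto

lemma distinct_tree_perm: "distinct (tree_perm h t b)"
  by (induction t arbitrary: b) (auto simp: set_tree_perm)

lemma tree_perm_inject: "tree_perm h t b = tree_perm h t' b \<Longrightarrow> t = t'"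
proof (induction t arbitrary: t' b)
  case Leaf
  then show ?case by (cases t') auto
next
  case (Node l r)
  then obtain l' r' where t': "t' = Node l' r'" by (cases t') auto
  let ?bl = "\<lambda>r. if h then Suc b + size r else Suc b"
  let ?br = "\<lambda>l. if h then Suc b else Suc b + size l"
  have "Suc b \<notin> set (tree_perm h l (?bl r))" "Suc b \<notin> set (tree_perm h r (?br l))"
    by (auto simp: set_tree_perm)
  with Node.prems t' have l: "tree_perm h l (?bl r) = tree_perm h l' (?bl r')"
    and r: "tree_perm h r (?br l) = tree_perm h r' (?br l')"
    by (auto simp: append_Cons_eq_iff)
  have "size l = size l'" "size r = size r'"
    using arg_cong[OF l, of length] arg_cong[OF r, of length] by simp_all
  then have "l = l'" "r = r'"
    using Node.IH l r by metis+
  with t' show ?case by simp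
qed

definition misordered :: "bool \<Rightarrow> nat \<Rightarrow> nat \<Rightarrow> bool" where
  "misordered left_high x z \<longleftrightarrow> (if left_high then x < z else z < x)"

lemma tree_perm_avoids: "\<not> has_triple (valley (misordered h)) (tree_perm h t b)"
proof (induction t arbitrary: b)
  case Leaf
  then show ?case by (simp add: has_triple_def)
next
  case (Node l r)
  have "\<forall>x \<in> set (tree_perm h l (if h then Suc b + size r else Suc b))
      \<union> set (tree_perm h r (if h then Suc b else Suc b + size l)). Suc b < x"
    by (auto simp: set_tree_perm)
  with Node.IH show ?case
    by (auto simp: has_triple_valley_split set_tree_perm misordered_def)
qed

lemma ordered_Un_interval:
  fixes A B :: "nat set"
  assumes AB: "A \<union> B = {a..<c}" and below: "\<forall>x\<in>A. \<forall>y\<in>B. x < y"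
  shows "A = {a..<a + card A} \<and> B = {a + card A..<c}"
proof (cases "B = {}")
  case True
  with AB show ?thesis by auto
next
  case False
  have "finite B" using AB by (metis finite_Un finite_atLeastLessThan)
  define k where "k = Min B"
  with False \<open>finite B\<close> have "k \<in> B" "\<forall>y\<in>B. k \<le> y" by auto
  from \<open>k \<in> B\<close> AB have "a \<le> k" by auto
  have "A = {a..<k}"
  proof (intro equalityI subsetI)
    fix x assume "x \<in> A"
    with AB below \<open>k \<in> B\<close> show "x \<in> {a..<k}" by auto
  next
    fix x assume "x \<in> {a..<k}"
    moreover have "k < c" using \<open>k \<in> B\<close> AB by auto
    ultimately have "x \<in> A \<union> B" "x \<notin> B" using AB \<open>\<forall>y\<in>B. k \<le> y\<close> by auto
    then show "x \<in> A" by blast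
  qed
  moreover have "B = {k..<c}"
  proof (intro equalityI subsetI)
    fix y assume "y \<in> B"
    with AB \<open>\<forall>y\<in>B. k \<le> y\<close> show "y \<in> {k..<c}" by auto
  next
    fix y assume "y \<in> {k..<c}"
    with \<open>a \<le> k\<close> have "y \<in> A \<union> B" "y \<notin> A" using AB \<open>A = {a..<k}\<close> by auto
    then show "y \<in> B" by blast
  qed
  ultimately show ?thesis using \<open>a \<le> k\<close> by simp
qed

lemma misordered_free_blocks:
  assumes LR: "set L \<union> set R = {Suc a..<Suc a + (length L + length R)}"
    and "distinct L" "distinct R" "set L \<inter> set R = {}"
    and cross: "\<forall>x\<in>set L. \<forall>z\<in>set R. \<not> misordered h x z"
  shows "set L = {Suc (if h then a + length R else a)..(if h then a + length R else a) + length L}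
    \<and> set R = {Suc (if h then a else a + length L)..(if h then a else a + length L) + length R}"
proof (cases h)
  case True
  with cross \<open>set L \<inter> set R = {}\<close> have "\<forall>x\<in>set R. \<forall>y\<in>set L. x < y"
    by (fastforce simp: misordered_def)
  moreover from LR have "set R \<union> set L = {Suc a..<Suc a + (length L + length R)}"
    by blast
  ultimately have "set R = {Suc a..<Suc a + card (set R)} \<and>
    set L = {Suc a + card (set R)..<Suc a + (length L + length R)}"
    by (rule ordered_Un_interval[rotated])
  with True \<open>distinct R\<close> show ?thesis
    by (simp add: distinct_card atLeastLessThanSuc_atLeastAtMost)
next
  case False
  with cross \<open>set L \<inter> set R = {}\<close> have "\<forall>x\<in>set L. \<forall>y\<in>set R. x < y"
    by (fastforce simp: misordered_def)
  with LR have "set L = {Suc a..<Suc a + card (set L)} \<and>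
    set R = {Suc a + card (set L)..<Suc a + (length L + length R)}"
    by (rule ordered_Un_interval)
  with False \<open>distinct L\<close> show ?thesis
    by (simp add: distinct_card atLeastLessThanSuc_atLeastAtMost)
qed

lemma tree_perm_surj:
  assumes "distinct xs" "set xs = {Suc b..b + length xs}"
    and "\<not> has_triple (valley (misordered h)) xs"
  shows "\<exists>t. xs = tree_perm h t b"
  using assms
proof (induction "length xs" arbitrary: xs b rule: less_induct)
  case less
  show ?case
  proof (cases xs)
    case Nil
    then show ?thesis by (metis tree_perm.simps(1))
  next
    case (Cons _ _)
    with less.prems(2) have "Suc b \<in> set xs" by auto
    then obtain L R where xs: "xs = L @ Suc b # R" by (meson split_list)
    with less.prems(1) have "distinct L" "distinct R" "set L \<inter> set R = {}"
      by auto
    from xs less.prems(1) have "set L \<union> set R = set xs - {Suc b}"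
      by auto
    also have "\<dots> = {Suc b..b + length xs} - {Suc b}"
      using less.prems(2) by simp
    also have "\<dots> = {Suc (Suc b)..<Suc (Suc b) + (length L + length R)}"
      using xs by auto
    finally have LR: "set L \<union> set R = {Suc (Suc b)..<Suc (Suc b) + (length L + length R)}" .
    then have min: "\<forall>x \<in> set L \<union> set R. Suc b < x" by auto
    from less.prems(3) have avoid_L: "\<not> has_triple (valley (misordered h)) L"
      and avoid_R: "\<not> has_triple (valley (misordered h)) R"
      and cross: "\<forall>x\<in>set L. \<forall>z\<in>set R. \<not> misordered h x z"
      unfolding xs has_triple_valley_split[OF min] by auto
    define bL where "bL = (if h then Suc b + length R else Suc b)"
    define bR where "bR = (if h then Suc b else Suc b + length L)"
    have "set L = {Suc bL..bL + length L}" "set R = {Suc bR..bR + length R}"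
      using misordered_free_blocks[OF LR \<open>distinct L\<close> \<open>distinct R\<close> \<open>set L \<inter> set R = {}\<close> cross]
      by (simp_all add: bL_def bR_def)
    have "length L < length xs" "length R < length xs" using xs by auto
    then obtain tl tr where "L = tree_perm h tl bL" "R = tree_perm h tr bR"
      using less.hyps[OF _ \<open>distinct L\<close> _ avoid_L] less.hyps[OF _ \<open>distinct R\<close> _ avoid_R]
        \<open>set L = {Suc bL..bL + length L}\<close> \<open>set R = {Suc bR..bR + length R}\<close>
      by blast
    then show ?thesis
      by (intro exI[of _ "Node tl tr"]) (simp add: xs bL_def bR_def)
  qed
qed

lemma descent_set_append:
  "descent_set (xs @ ys) = descent_set xs
     \<union> (if xs \<noteq> [] \<and> ys \<noteq> [] \<and> hd ys < last xs then {length xs} else {})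
     \<union> (\<lambda>i. i + length xs) ` descent_set ys"
proof (rule set_eqI)
  fix i
  consider "i < length xs" | "i = length xs" | j where "j > 0" "i = j + length xs"
    by (metis less_imp_add_positive linorder_neqE_nat add.commute)
  then show "i \<in> descent_set (xs @ ys) \<longleftrightarrow> i \<in> descent_set xs
     \<union> (if xs \<noteq> [] \<and> ys \<noteq> [] \<and> hd ys < last xs then {length xs} else {})
     \<union> (\<lambda>i. i + length xs) ` descent_set ys"
  proof cases
    case 1
    then show ?thesis by (auto simp: descent_set_def nth_append)
  next
    case 2
    then show ?thesis
      by (cases xs rule: rev_cases; cases ys) (auto simp: descent_set_def nth_append)
  next
    case 3
    then show ?thesis by (auto simp: descent_set_def nth_append)
  qed
qed

lemma descent_set_min_split:
  assumes "\<forall>x \<in> set L \<union> set R. m < x"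
  shows "descent_set (L @ m # R) = descent_set L \<union> (if L = [] then {} else {length L})
    \<union> (\<lambda>i. i + Suc (length L)) ` descent_set R"
proof -
  have "descent_set (m # R) = (\<lambda>i. i + 1) ` descent_set R"
    using descent_set_append[of "[m]" R] assms by (cases R) (auto simp: descent_set_def)
  then show ?thesis
    using descent_set_append[of L "m # R"] assms by (auto simp: image_image)
qed

lemma descent_set_tree_perm: "descent_set (tree_perm h t b) = descent_set (tree_perm h' t b')"
proof (induction t arbitrary: b b')
  case Leaf
  then show ?case by simp
next
  case (Node l r)
  have node: "descent_set (tree_perm g (Node l r) c) =
      descent_set (tree_perm g l (if g then Suc c + size r else Suc c))
      \<union> (if size l = 0 then {} else {size l})
      \<union> (\<lambda>i. i + Suc (size l)) ` descent_set (tree_perm g r (if g then Suc c else Suc c + size l))"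
    for g c
  proof -
    have min: "\<forall>x \<in> set (tree_perm g l (if g then Suc c + size r else Suc c))
        \<union> set (tree_perm g r (if g then Suc c else Suc c + size l)). Suc c < x"
      by (auto simp: set_tree_perm)
    show ?thesis
      unfolding tree_perm.simps descent_set_min_split[OF min] by (simp flip: length_0_conv)
  qed
  show ?case
    unfolding node by (metis Node.IH)
qed

lemma misordered_True: "misordered True = (<)"
  and misordered_False: "misordered False = (>)"
  by (auto simp: fun_eq_iff misordered_def)

lemma bij_betw_tree_perm:
  "bij_betw (\<lambda>t. tree_perm h t 0) {t. size t = n}
     {p \<in> perms n. \<not> has_triple (valley (misordered h)) p}"
  unfolding bij_betw_def
proof
  show "inj_on (\<lambda>t. tree_perm h t 0) {t. size t = n}"
    by (auto intro: inj_onI tree_perm_inject)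
  show "(\<lambda>t. tree_perm h t 0) ` {t. size t = n} = {p \<in> perms n. \<not> has_triple (valley (misordered h)) p}"
  proof (intro equalityI subsetI)
    fix p assume "p \<in> {p \<in> perms n. \<not> has_triple (valley (misordered h)) p}"
    then have "distinct p" "set p = {Suc 0..0 + length p}" "\<not> has_triple (valley (misordered h)) p"
      "length p = n"
      by (auto simp: perms_def)
    then show "p \<in> (\<lambda>t. tree_perm h t 0) ` {t. size t = n}"
      using tree_perm_surj by fastforce
  qed (auto simp: perms_def set_tree_perm distinct_tree_perm tree_perm_avoids)
qed

definition complement :: "nat \<Rightarrow> nat list \<Rightarrow> nat list" where
  "complement n p = map (\<lambda>x. Suc n - x) p"

lemma complement_perms:
  assumes "p \<in> perms n"
  shows "complement n p \<in> perms n" "complement n (complement n p) = p"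
proof -
  have "inj_on (\<lambda>x. Suc n - x) {1..n}" by (auto simp: inj_on_def)
  moreover have "(\<lambda>x. Suc n - x) ` {1..n} = {1..n}"
  proof (intro equalityI subsetI)
    fix y assume "y \<in> {1..n}"
    then have "y = Suc n - (Suc n - y)" "Suc n - y \<in> {1..n}" by auto
    then show "y \<in> (\<lambda>x. Suc n - x) ` {1..n}" by (rule image_eqI)
  qed auto
  ultimately show "complement n p \<in> perms n"
    using assms by (simp add: perms_def complement_def distinct_map)
  show "complement n (complement n p) = p"
    using assms by (auto simp: perms_def complement_def intro!: map_idI)
qed

lemma descent_set_complement:
  assumes "p \<in> perms n"
  shows "descent_set (complement n p) = {1..<n} - descent_set p"
proof (rule set_eqI)
  fix i
  have p: "length p = n" "distinct p" "set p = {1..n}" using assms by (auto simp: perms_def)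
  show "i \<in> descent_set (complement n p) \<longleftrightarrow> i \<in> {1..<n} - descent_set p"
  proof (cases "1 \<le> i \<and> i < n")
    case True
    with p have "p!(i - 1) \<noteq> p!i" "p!(i - 1) \<le> n" "p!i \<le> n"
      by (auto simp: nth_eq_iff_index_eq dest: nth_mem[of "i - 1"] nth_mem[of i])
    then have "Suc n - p!(i - 1) > Suc n - p!i \<longleftrightarrow> \<not> p!(i - 1) > p!i" by linarith
    moreover from True have "i - 1 < n" by linarith
    ultimately show ?thesis using True p by (simp add: descent_set_def complement_def)
  qed (use p in \<open>auto simp: descent_set_def complement_def\<close>)
qed

lemma contains_pattern_complement:
  assumes "\<forall>x\<in>set p. x \<le> c" "\<forall>x\<in>set \<sigma>. x \<le> d"
  shows "contains_pattern (map (\<lambda>x. c - x) p) (map (\<lambda>x. d - x) \<sigma>) \<longleftrightarrow> contains_pattern p \<sigma>"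
proof -
  have reverse: "a - x < a - y \<longleftrightarrow> y < x" if "x \<le> a" "y \<le> a" for a x y :: nat
    using that by linarith
  have "(\<forall>i<length \<sigma>. \<forall>j<length \<sigma>.
        (map (\<lambda>x. c - x) p ! idx i < map (\<lambda>x. c - x) p ! idx j) \<longleftrightarrow>
        (map (\<lambda>x. d - x) \<sigma> ! i < map (\<lambda>x. d - x) \<sigma> ! j)) \<longleftrightarrow>
      (\<forall>i<length \<sigma>. \<forall>j<length \<sigma>. (p!idx i < p!idx j) \<longleftrightarrow> (\<sigma>!i < \<sigma>!j))"
    if "\<forall>i<length \<sigma>. idx i < length p" for idx
    using that assms by (auto simp: reverse dest: nth_mem)
  then show ?thesis
    unfolding contains_pattern_def length_map by (intro ex_cong1 conj_cong refl)
qed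

lemma bij_betw_complement_avoiders:
  assumes "\<forall>x\<in>set \<sigma>. x \<le> d"
  shows "bij_betw (complement n) (avoiders n \<sigma>) (avoiders n (map (\<lambda>x. d - x) \<sigma>))"
proof (rule bij_betw_byWitness[where f' = "complement n"])
  have contains_iff: "contains_pattern (complement n p) (map (\<lambda>x. d - x) \<sigma>) \<longleftrightarrow> contains_pattern p \<sigma>"
    if "p \<in> perms n" for p
    using that assms unfolding complement_def
    by (intro contains_pattern_complement) (auto simp: perms_def)
  show "complement n ` avoiders n \<sigma> \<subseteq> avoiders n (map (\<lambda>x. d - x) \<sigma>)"
    by (auto simp: avoiders_def contains_iff complement_perms)
  show "complement n ` avoiders n (map (\<lambda>x. d - x) \<sigma>) \<subseteq> avoiders n \<sigma>"
  proof (intro image_subsetI)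
    fix q assume "q \<in> avoiders n (map (\<lambda>x. d - x) \<sigma>)"
    then show "complement n q \<in> avoiders n \<sigma>"
      using contains_iff[of "complement n q"] by (auto simp: avoiders_def complement_perms)
  qed
qed (auto simp: avoiders_def complement_perms)

lemma exists_invariant_bij_betw:
  assumes f: "bij_betw f T A" and g: "bij_betw g T B" and "\<forall>t\<in>T. D (f t) = D (g t)"
  shows "\<exists>h. bij_betw h A B \<and> (\<forall>p\<in>A. D (h p) = D p)"
proof (intro exI conjI ballI)
  show "bij_betw (g \<circ> inv_into T f) A B"
    using bij_betw_inv_into[OF f] g by (rule bij_betw_trans)
  fix p assume "p \<in> A"
  then have "inv_into T f p \<in> T" "f (inv_into T f p) = p"
    using f by (auto simp: bij_betw_def inv_into_into f_inv_into_f)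
  with assms(3) show "D ((g \<circ> inv_into T f) p) = D p" by force
qed

lemma ballot_iff_descent_set:
  assumes "distinct p"
  shows "ballot p \<longleftrightarrow>
    (\<forall>k \<le> length p. card (descent_set p \<inter> {..<k}) \<le> card ({1..<k} - descent_set p))"
proof -
  have "{j. 1 \<le> j \<and> j < k \<and> p!(j - 1) > p!j} = descent_set p \<inter> {..<k}"
    "{j. 1 \<le> j \<and> j < k \<and> p!(j - 1) < p!j} = {1..<k} - descent_set p"
    if "k \<le> length p" for k
  proof -
    have "p!(j - 1) < p!j \<longleftrightarrow> \<not> p!(j - 1) > p!j" if "1 \<le> j" "j < k" for j
    proof -
      have "p!(j - 1) \<noteq> p!j"
        using assms that \<open>k \<le> length p\<close> by (simp add: nth_eq_iff_index_eq)
      then show ?thesis by linarith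
    qed
    with that show "{j. 1 \<le> j \<and> j < k \<and> p!(j - 1) > p!j} = descent_set p \<inter> {..<k}"
      "{j. 1 \<le> j \<and> j < k \<and> p!(j - 1) < p!j} = {1..<k} - descent_set p"
      by (auto simp: descent_set_def)
  qed
  then show ?thesis
    unfolding ballot_def by simp
qed

lemma card_ballot_avoiders_eq:
  assumes h: "bij_betw h (avoiders n \<sigma>) (avoiders n \<tau>)"
    and descents: "\<forall>p\<in>avoiders n \<sigma>. descent_set (h p) = descent_set p"
  shows "card (ballot_avoiders n \<sigma>) = card (ballot_avoiders n \<tau>)"
proof -
  have "ballot (h p) \<longleftrightarrow> ballot p" if "p \<in> avoiders n \<sigma>" for p
  proof -
    have "h p \<in> avoiders n \<tau>" using h that by (auto simp: bij_betw_def)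
    with that show ?thesis
      using descents by (auto simp: ballot_iff_descent_set avoiders_def perms_def)
  qed
  then have "bij_betw h (ballot_avoiders n \<sigma>) (ballot_avoiders n \<tau>)"
    unfolding ballot_avoiders_def by (rule bij_betw_Collect[OF h])
  then show ?thesis by (rule bij_betw_same_card)
qed

lemma bij_betw_tree_perm_213:
  "bij_betw (\<lambda>t. tree_perm True t 0) {t. size t = n} (avoiders n [2,1,3])"
proof -
  have "avoiders n [2,1,3] = {p \<in> perms n. \<not> has_triple (valley (misordered True)) p}"
    unfolding avoiders_def contains_213_iff misordered_True ..
  then show ?thesis by (simp only: bij_betw_tree_perm)
qed

lemma bij_betw_tree_perm_312:
  "bij_betw (\<lambda>t. tree_perm False t 0) {t. size t = n} (avoiders n [3,1,2])"
proof -
  have "avoiders n [3,1,2] = {p \<in> perms n. \<not> has_triple (valley (misordered False)) p}"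
    unfolding avoiders_def contains_312_iff misordered_False ..
  then show ?thesis by (simp only: bij_betw_tree_perm)
qed

lemma bij_betw_complement_tree_perm_231:
  "bij_betw (complement n \<circ> (\<lambda>t. tree_perm True t 0)) {t. size t = n} (avoiders n [2,3,1])"
proof -
  have "bij_betw (complement n) (avoiders n [2,1,3]) (avoiders n [2,3,1])"
    using bij_betw_complement_avoiders[of "[2,1,3]" 4 n] by simp
  with bij_betw_tree_perm_213 show ?thesis by (rule bij_betw_trans)
qed

lemma bij_betw_complement_tree_perm_132:
  "bij_betw (complement n \<circ> (\<lambda>t. tree_perm False t 0)) {t. size t = n} (avoiders n [1,3,2])"
proof -
  have "bij_betw (complement n) (avoiders n [3,1,2]) (avoiders n [1,3,2])"
    using bij_betw_complement_avoiders[of "[3,1,2]" 4 n] by simp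
  with bij_betw_tree_perm_312 show ?thesis by (rule bij_betw_trans)
qed

lemma descent_set_complement_tree_perm:
  assumes "size t = n"
  shows "descent_set (complement n (tree_perm h t 0)) = descent_set (complement n (tree_perm h' t 0))"
proof -
  have "tree_perm g t 0 \<in> perms n" for g
    using bij_betw_apply[OF bij_betw_tree_perm] assms by simp
  then show ?thesis by (simp add: descent_set_complement descent_set_tree_perm[of h t 0 h' 0])
qed

theorem mainTheorem18:
  fixes n :: nat
  assumes "n \<ge> 1"
  shows "(\<exists>\<phi>. bij_betw \<phi> (avoiders n [2,1,3]) (avoiders n [3,1,2]) \<and>
            (\<forall>p \<in> avoiders n [2,1,3]. descent_set (\<phi> p) = descent_set p))
       \<and> (\<exists>\<eta>. bij_betw \<eta> (avoiders n [1,3,2]) (avoiders n [2,3,1]) \<and>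
            (\<forall>p \<in> avoiders n [1,3,2]. descent_set (\<eta> p) = descent_set p))
       \<and> card (ballot_avoiders n [2,1,3]) = card (ballot_avoiders n [3,1,2])
       \<and> card (ballot_avoiders n [1,3,2]) = card (ballot_avoiders n [2,3,1])"
proof -
  have "\<forall>t\<in>{t. size t = n}. descent_set (tree_perm True t 0) = descent_set (tree_perm False t 0)"
    using descent_set_tree_perm by blast
  from exists_invariant_bij_betw[OF bij_betw_tree_perm_213 bij_betw_tree_perm_312 this]
  obtain \<phi> where \<phi>: "bij_betw \<phi> (avoiders n [2,1,3]) (avoiders n [3,1,2])"
    "\<forall>p \<in> avoiders n [2,1,3]. descent_set (\<phi> p) = descent_set p"
    by blast
  have "\<forall>t\<in>{t. size t = n}. descent_set ((complement n \<circ> (\<lambda>t. tree_perm False t 0)) t)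
      = descent_set ((complement n \<circ> (\<lambda>t. tree_perm True t 0)) t)"
    using descent_set_complement_tree_perm by simp
  from exists_invariant_bij_betw[OF bij_betw_complement_tree_perm_132 bij_betw_complement_tree_perm_231 this]
  obtain \<eta> where \<eta>: "bij_betw \<eta> (avoiders n [1,3,2]) (avoiders n [2,3,1])"
    "\<forall>p \<in> avoiders n [1,3,2]. descent_set (\<eta> p) = descent_set p"
    by blast
  show ?thesis
    using \<phi> \<eta> card_ballot_avoiders_eq[OF \<phi>] card_ballot_avoiders_eq[OF \<eta>] by blast
qed

end
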